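(* Let $\mathcal K$ be a finitely complete 2-category with a good yoneda structure. Let $A$ be an admissible object, $f:A\to B$ an admissible 1-cell, $g:B\to\mathcal PA$ a 1-cell, and $\phi:y_A\Rightarrow gf$ a 2-cell. If $\phi$ exhibits $g$ as a left extension of $y_A$ along $f$, then this left extension is pointwise and $\phi$ exhibits $f$ as an absolute left lifting of $y_A$ along $g$.
   Context: For $f:A\to B$, $g:C\to B$ the lax pullback $f/g$ has projections $p:f/g\to A$, $q:f/g\to C$ and universal 2-cell $\lambda:fp\Rightarrow gq$. Given $f:A\to C$, $g:A\to B$, $h:B\to C$, a 2-cell $\phi:f\Rightarrow hg$ exhibits $h$ as a left extension of $f$ along $g$ if for every $k:B\to C$, $\kappa\mapsto(\kappa g)\cdot\phi$ is a bijection from 2-cells $h\Rightarrow k$ to 2-cells $f\Rightarrow kg$; it exhibits $g$ as a left lifting of $f$ along (through) $h$ if for every $k:A\to B$, $\kappa\mapsto(h\kappa)\cdot\phi$ is a bijection from 2-cells $g\Rightarrow k$ to 2-cells $f\Rightarrow hk$; this left lifting is absolute if $\phi j$ exhibits $gj$ as a left lifting of $fj$ along $h$ for all $j:D\to A$. $\phi$ exhibits $h$ as a pointwise left extension of $f$ along $g$ if for every $c:X\to B$, with lax pullback $p:g/c\to A$, $q:g/c\to X$, $\lambda:gp\Rightarrow cq$, the 2-cell $(h\lambda)\cdot(\phi p)$ exhibits $hc$ as a left extension of $fp$ along $q$. A good yoneda structure on a finitely complete 2-category consists of: a class of admissible 1-cells such that $fg$ is admissible whenever $f$ is; an object $A$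 is admissible when $1_A$ is; for each admissible object $A$ an object $\mathcal PA$ and an admissible $y_A:A\to\mathcal PA$; for each $f:A\to B$ with $A$, $f$ admissible, a 1-cell $B(f,1):B\to\mathcal PA$ and a 2-cell $\chi^f:y_A\Rightarrow B(f,1)f$; such that (i) $\chi^f$ exhibits $f$ as an absolute left lifting of $y_A$ through $B(f,1)$; (ii) whenever $A$, $f:A\to B$ are admissible and $\phi:y_A\Rightarrow gf$ exhibits $f$ as an absolute left lifting of $y_A$ along $g$, $\phi$ exhibits $g$ as a pointwise left extension of $y_A$ along $f$. *)

theory Defs
  imports Main
begin

text \<open>A (strict) 2-category: objects, 1-cells with source/target, 2-cells with
  domain/codomain 1-cells; cmp g f is the composite g after f; vcmp b a is vertical
  composite (a first); hcmp b a is horizontal composite (a on the right/first).\<close>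

record ('o, 'a, 'c) twocat =
  obj  :: "'o set"
  arr  :: "'a set"
  src  :: "'a \<Rightarrow> 'o"
  tgt  :: "'a \<Rightarrow> 'o"
  cell :: "'c set"
  dom2 :: "'c \<Rightarrow> 'a"
  cod2 :: "'c \<Rightarrow> 'a"
  cmp  :: "'a \<Rightarrow> 'a \<Rightarrow> 'a"
  idn  :: "'o \<Rightarrow> 'a"
  vcmp :: "'c \<Rightarrow> 'c \<Rightarrow> 'c"
  hcmp :: "'c \<Rightarrow> 'c \<Rightarrow> 'c"
  id2  :: "'a \<Rightarrow> 'c"

definition hom :: "('o,'a,'c,'m) twocat_scheme \<Rightarrow> 'o \<Rightarrow> 'o \<Rightarrow> 'a set" where
  "hom C A B = {f \<in> arr C. src C f = A \<and> tgt C f = B}"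

definition cells :: "('o,'a,'c,'m) twocat_scheme \<Rightarrow> 'a \<Rightarrow> 'a \<Rightarrow> 'c set" where
  "cells C f g = {\<alpha> \<in> cell C. dom2 C \<alpha> = f \<and> cod2 C \<alpha> = g}"

text \<open>Whiskering: wr C a j is "a j", wl C h a is "h a".\<close>
definition wr :: "('o,'a,'c,'m) twocat_scheme \<Rightarrow> 'c \<Rightarrow> 'a \<Rightarrow> 'c" where
  "wr C \<alpha> j = hcmp C \<alpha> (id2 C j)"

definition wl :: "('o,'a,'c,'m) twocat_scheme \<Rightarrow> 'a \<Rightarrow> 'c \<Rightarrow> 'c" where
  "wl C h \<alpha> = hcmp C (id2 C h) \<alpha>"

definition two_cat :: "('o,'a,'c,'m) twocat_scheme \<Rightarrow> bool" where
  "two_cat C \<longleftrightarrow>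
    (\<forall>f\<in>arr C. src C f \<in> obj C \<and> tgt C f \<in> obj C) \<and>
    (\<forall>A\<in>obj C. idn C A \<in> hom C A A) \<and>
    (\<forall>f\<in>arr C. \<forall>g\<in>arr C. tgt C f = src C g \<longrightarrow> cmp C g f \<in> hom C (src C f) (tgt C g)) \<and>
    (\<forall>f\<in>arr C. \<forall>g\<in>arr C. \<forall>h\<in>arr C. tgt C f = src C g \<longrightarrow> tgt C g = src C h \<longrightarrow>
        cmp C h (cmp C g f) = cmp C (cmp C h g) f) \<and>
    (\<forall>f\<in>arr C. cmp C f (idn C (src C f)) = f \<and> cmp C (idn C (tgt C f)) f = f) \<and>
    (\<forall>\<alpha>\<in>cell C. dom2 C \<alpha> \<in> arr C \<and> cod2 C \<alpha> \<in> arr C \<and>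
        src C (dom2 C \<alpha>) = src C (cod2 C \<alpha>) \<and> tgt C (dom2 C \<alpha>) = tgt C (cod2 C \<alpha>)) \<and>
    (\<forall>f\<in>arr C. id2 C f \<in> cells C f f) \<and>
    (\<forall>\<alpha>\<in>cell C. \<forall>\<beta>\<in>cell C. cod2 C \<alpha> = dom2 C \<beta> \<longrightarrow>
        vcmp C \<beta> \<alpha> \<in> cells C (dom2 C \<alpha>) (cod2 C \<beta>)) \<and>
    (\<forall>\<alpha>\<in>cell C. \<forall>\<beta>\<in>cell C. \<forall>\<gamma>\<in>cell C. cod2 C \<alpha> = dom2 C \<beta> \<longrightarrow> cod2 C \<beta> = dom2 C \<gamma> \<longrightarrow>
        vcmp C \<gamma> (vcmp C \<beta> \<alpha>) = vcmp C (vcmp C \<gamma> \<beta>) \<alpha>) \<and>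
    (\<forall>\<alpha>\<in>cell C. vcmp C \<alpha> (id2 C (dom2 C \<alpha>)) = \<alpha> \<and> vcmp C (id2 C (cod2 C \<alpha>)) \<alpha> = \<alpha>) \<and>
    (\<forall>\<alpha>\<in>cell C. \<forall>\<beta>\<in>cell C. tgt C (dom2 C \<alpha>) = src C (dom2 C \<beta>) \<longrightarrow>
        hcmp C \<beta> \<alpha> \<in> cells C (cmp C (dom2 C \<beta>) (dom2 C \<alpha>)) (cmp C (cod2 C \<beta>) (cod2 C \<alpha>))) \<and>
    (\<forall>\<alpha>\<in>cell C. \<forall>\<beta>\<in>cell C. \<forall>\<gamma>\<in>cell C.
        tgt C (dom2 C \<alpha>) = src C (dom2 C \<beta>) \<longrightarrow> tgt C (dom2 C \<beta>) = src C (dom2 C \<gamma>) \<longrightarrow>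
        hcmp C \<gamma> (hcmp C \<beta> \<alpha>) = hcmp C (hcmp C \<gamma> \<beta>) \<alpha>) \<and>
    (\<forall>\<alpha>\<in>cell C. hcmp C (id2 C (idn C (tgt C (dom2 C \<alpha>)))) \<alpha> = \<alpha> \<and>
        hcmp C \<alpha> (id2 C (idn C (src C (dom2 C \<alpha>)))) = \<alpha>) \<and>
    (\<forall>f\<in>arr C. \<forall>g\<in>arr C. tgt C f = src C g \<longrightarrow>
        hcmp C (id2 C g) (id2 C f) = id2 C (cmp C g f)) \<and>
    (\<forall>\<alpha>\<in>cell C. \<forall>\<alpha>'\<in>cell C. \<forall>\<beta>\<in>cell C. \<forall>\<beta>'\<in>cell C.
        cod2 C \<alpha> = dom2 C \<alpha>' \<longrightarrow> cod2 C \<beta> = dom2 C \<beta>' \<longrightarrow> tgt C (dom2 C \<alpha>) = src C (dom2 C \<beta>) \<longrightarrow>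
        vcmp C (hcmp C \<beta>' \<alpha>') (hcmp C \<beta> \<alpha>) = hcmp C (vcmp C \<beta>' \<beta>) (vcmp C \<alpha>' \<alpha>))"

definition is_terminal :: "('o,'a,'c,'m) twocat_scheme \<Rightarrow> 'o \<Rightarrow> bool" where
  "is_terminal C T \<longleftrightarrow> T \<in> obj C \<and>
    (\<forall>X\<in>obj C. (\<exists>!u. u \<in> hom C X T) \<and>
       (\<forall>u\<in>hom C X T. \<forall>v\<in>hom C X T. \<exists>!\<gamma>. \<gamma> \<in> cells C u v))"

definition is_pullback :: "('o,'a,'c,'m) twocat_scheme \<Rightarrow> 'a \<Rightarrow> 'a \<Rightarrow> 'o \<Rightarrow> 'a \<Rightarrow> 'a \<Rightarrow> bool" where
  "is_pullback C f g P p q \<longleftrightarrow>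
    P \<in> obj C \<and> p \<in> hom C P (src C f) \<and> q \<in> hom C P (src C g) \<and> cmp C f p = cmp C g q \<and>
    (\<forall>X\<in>obj C. \<forall>p'\<in>hom C X (src C f). \<forall>q'\<in>hom C X (src C g). cmp C f p' = cmp C g q' \<longrightarrow>
        (\<exists>!u. u \<in> hom C X P \<and> cmp C p u = p' \<and> cmp C q u = q')) \<and>
    (\<forall>X\<in>obj C. \<forall>u\<in>hom C X P. \<forall>v\<in>hom C X P.
       \<forall>\<alpha>\<in>cells C (cmp C p u) (cmp C p v). \<forall>\<beta>\<in>cells C (cmp C q u) (cmp C q v).
        wl C f \<alpha> = wl C g \<beta> \<longrightarrow>
        (\<exists>!\<gamma>. \<gamma> \<in> cells C u v \<and> wl C p \<gamma> = \<alpha> \<and> wl C q \<gamma> = \<beta>))"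

definition is_lax_pullback :: "('o,'a,'c,'m) twocat_scheme \<Rightarrow> 'a \<Rightarrow> 'a \<Rightarrow> 'o \<Rightarrow> 'a \<Rightarrow> 'a \<Rightarrow> 'c \<Rightarrow> bool" where
  "is_lax_pullback C f g P p q lam \<longleftrightarrow>
    P \<in> obj C \<and> p \<in> hom C P (src C f) \<and> q \<in> hom C P (src C g) \<and>
    lam \<in> cells C (cmp C f p) (cmp C g q) \<and>
    (\<forall>X\<in>obj C. \<forall>p'\<in>hom C X (src C f). \<forall>q'\<in>hom C X (src C g).
       \<forall>lam'\<in>cells C (cmp C f p') (cmp C g q').
        (\<exists>!u. u \<in> hom C X P \<and> cmp C p u = p' \<and> cmp C q u = q' \<and> wr C lam u = lam')) \<and>
    (\<forall>X\<in>obj C. \<forall>u\<in>hom C X P. \<forall>v\<in>hom C X P.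
       \<forall>\<alpha>\<in>cells C (cmp C p u) (cmp C p v). \<forall>\<beta>\<in>cells C (cmp C q u) (cmp C q v).
        vcmp C (wl C g \<beta>) (wr C lam u) = vcmp C (wr C lam v) (wl C f \<alpha>) \<longrightarrow>
        (\<exists>!\<gamma>. \<gamma> \<in> cells C u v \<and> wl C p \<gamma> = \<alpha> \<and> wl C q \<gamma> = \<beta>))"

text \<open>Finitely complete 2-category: has a terminal object, pullbacks and lax pullbacks
  (comma objects); these generate all finite (weighted) 2-limits.\<close>
definition finitely_complete :: "('o,'a,'c,'m) twocat_scheme \<Rightarrow> bool" where
  "finitely_complete C \<longleftrightarrow> two_cat C \<and> (\<exists>T. is_terminal C T) \<and>
    (\<forall>f\<in>arr C. \<forall>g\<in>arr C. tgt C f = tgt C g \<longrightarrow> (\<exists>P p q. is_pullback C f g P p q)) \<and>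
    (\<forall>f\<in>arr C. \<forall>g\<in>arr C. tgt C f = tgt C g \<longrightarrow> (\<exists>P p q lam. is_lax_pullback C f g P p q lam))"

definition left_ext :: "('o,'a,'c,'m) twocat_scheme \<Rightarrow> 'a \<Rightarrow> 'a \<Rightarrow> 'a \<Rightarrow> 'c \<Rightarrow> bool" where
  "left_ext C f g h \<phi> \<longleftrightarrow>
    f \<in> arr C \<and> g \<in> arr C \<and> h \<in> arr C \<and> src C g = src C f \<and> tgt C g = src C h \<and> tgt C h = tgt C f \<and>
    \<phi> \<in> cells C f (cmp C h g) \<and>
    (\<forall>k\<in>hom C (src C h) (tgt C h).
       bij_betw (\<lambda>\<kappa>. vcmp C (wr C \<kappa> g) \<phi>) (cells C h k) (cells C f (cmp C k g)))"

definition left_lift :: "('o,'a,'c,'m) twocat_scheme \<Rightarrow> 'a \<Rightarrow> 'a \<Rightarrow> 'a \<Rightarrow> 'c \<Rightarrow> bool" where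
  "left_lift C f g h \<phi> \<longleftrightarrow>
    f \<in> arr C \<and> g \<in> arr C \<and> h \<in> arr C \<and> src C g = src C f \<and> tgt C g = src C h \<and> tgt C h = tgt C f \<and>
    \<phi> \<in> cells C f (cmp C h g) \<and>
    (\<forall>k\<in>hom C (src C g) (tgt C g).
       bij_betw (\<lambda>\<kappa>. vcmp C (wl C h \<kappa>) \<phi>) (cells C g k) (cells C f (cmp C h k)))"

definition abs_left_lift :: "('o,'a,'c,'m) twocat_scheme \<Rightarrow> 'a \<Rightarrow> 'a \<Rightarrow> 'a \<Rightarrow> 'c \<Rightarrow> bool" where
  "abs_left_lift C f g h \<phi> \<longleftrightarrow> left_lift C f g h \<phi> \<and>
    (\<forall>D\<in>obj C. \<forall>j\<in>hom C D (src C f).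
       left_lift C (cmp C f j) (cmp C g j) h (wr C \<phi> j))"

definition pointwise_left_ext :: "('o,'a,'c,'m) twocat_scheme \<Rightarrow> 'a \<Rightarrow> 'a \<Rightarrow> 'a \<Rightarrow> 'c \<Rightarrow> bool" where
  "pointwise_left_ext C f g h \<phi> \<longleftrightarrow> left_ext C f g h \<phi> \<and>
    (\<forall>X\<in>obj C. \<forall>c\<in>hom C X (tgt C g). \<forall>P p q lam. is_lax_pullback C g c P p q lam \<longrightarrow>
       left_ext C (cmp C f p) q (cmp C h c) (vcmp C (wl C h lam) (wr C \<phi> p)))"

text \<open>Data: adm (admissible 1-cells), PP (presheaf object), y (yoneda maps),
  R f = B(f,1), chi f = chi^f.\<close>
definition adm_obj :: "('o,'a,'c,'m) twocat_scheme \<Rightarrow> 'a set \<Rightarrow> 'o \<Rightarrow> bool" where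
  "adm_obj C adm A \<longleftrightarrow> A \<in> obj C \<and> idn C A \<in> adm"

definition good_yoneda ::
  "('o,'a,'c,'m) twocat_scheme \<Rightarrow> 'a set \<Rightarrow> ('o \<Rightarrow> 'o) \<Rightarrow> ('o \<Rightarrow> 'a) \<Rightarrow> ('a \<Rightarrow> 'a) \<Rightarrow> ('a \<Rightarrow> 'c) \<Rightarrow> bool" where
  "good_yoneda C adm PP y R chi \<longleftrightarrow>
    finitely_complete C \<and> adm \<subseteq> arr C \<and>
    (\<forall>f\<in>adm. \<forall>g\<in>arr C. tgt C g = src C f \<longrightarrow> cmp C f g \<in> adm) \<and>
    (\<forall>A. adm_obj C adm A \<longrightarrow> PP A \<in> obj C \<and> y A \<in> hom C A (PP A) \<and> y A \<in> adm) \<and>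
    (\<forall>f\<in>adm. adm_obj C adm (src C f) \<longrightarrow>
       R f \<in> hom C (tgt C f) (PP (src C f)) \<and>
       chi f \<in> cells C (y (src C f)) (cmp C (R f) f) \<and>
       abs_left_lift C (y (src C f)) f (R f) (chi f)) \<and>
    (\<forall>f\<in>adm. adm_obj C adm (src C f) \<longrightarrow>
       (\<forall>g \<phi>. abs_left_lift C (y (src C f)) f g \<phi> \<longrightarrow>
          pointwise_left_ext C (y (src C f)) f g \<phi>))"

end

theory Submission
  imports Defs
begin

text \<open>Since \<open>\<chi>\<^sup>f\<close> is an absolute left lifting, axiom (ii) makes \<open>B(f,1)\<close> a
  (pointwise) left extension of \<open>y\<^sub>A\<close> along \<open>f\<close>. Left extensions are unique up to a
  unique invertible 2-cell, so \<open>\<phi>\<close> is \<open>\<chi>\<^sup>f\<close> followed by an isomorphism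
  \<open>B(f,1) \<cong> g\<close> whiskered by \<open>f\<close>. Absolute left liftings are stable under such
  isomorphisms, hence \<open>\<phi>\<close> is an absolute left lifting, and axiom (ii) once more
  shows that \<open>g\<close> is pointwise.\<close>

definition inverse_cells ::
  "('o,'a,'c,'m) twocat_scheme \<Rightarrow> 'a \<Rightarrow> 'a \<Rightarrow> 'c \<Rightarrow> 'c \<Rightarrow> bool" where
  "inverse_cells C H H' \<theta> \<theta>' \<longleftrightarrow>
    \<theta> \<in> cells C H H' \<and> \<theta>' \<in> cells C H' H \<and>
    vcmp C \<theta>' \<theta> = id2 C H \<and> vcmp C \<theta> \<theta>' = id2 C H'"

locale two_category =
  fixes C :: "('o,'a,'c,'m) twocat_scheme"
  assumes two_cat: "two_cat C"
begin

lemma cells_arrD: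
  assumes "\<alpha> \<in> cells C f g"
  shows "\<alpha> \<in> cell C" "f \<in> arr C" "g \<in> arr C" "src C f = src C g" "tgt C f = tgt C g"
  using assms two_cat unfolding two_cat_def cells_def by blast+

lemma id2_in_cells: "f \<in> arr C \<Longrightarrow> id2 C f \<in> cells C f f"
  using two_cat unfolding two_cat_def by blast

lemma vcmp_in_cells:
  "\<alpha> \<in> cells C f g \<Longrightarrow> \<beta> \<in> cells C g h \<Longrightarrow> vcmp C \<beta> \<alpha> \<in> cells C f h"
proof -
  have "\<forall>\<alpha>\<in>cell C. \<forall>\<beta>\<in>cell C. cod2 C \<alpha> = dom2 C \<beta> \<longrightarrow>
      vcmp C \<beta> \<alpha> \<in> cells C (dom2 C \<alpha>) (cod2 C \<beta>)"
    using two_cat unfolding two_cat_def by blast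
  then show "\<alpha> \<in> cells C f g \<Longrightarrow> \<beta> \<in> cells C g h \<Longrightarrow> ?thesis" unfolding cells_def by auto
qed

lemma vcmp_assoc:
  assumes "\<alpha> \<in> cells C f g" "\<beta> \<in> cells C g h" "\<gamma> \<in> cells C h k"
  shows "vcmp C \<gamma> (vcmp C \<beta> \<alpha>) = vcmp C (vcmp C \<gamma> \<beta>) \<alpha>"
proof -
  have "\<forall>\<alpha>\<in>cell C. \<forall>\<beta>\<in>cell C. \<forall>\<gamma>\<in>cell C. cod2 C \<alpha> = dom2 C \<beta> \<longrightarrow> cod2 C \<beta> = dom2 C \<gamma> \<longrightarrow>
      vcmp C \<gamma> (vcmp C \<beta> \<alpha>) = vcmp C (vcmp C \<gamma> \<beta>) \<alpha>"
    using two_cat unfolding two_cat_def by blast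
  then show ?thesis using assms unfolding cells_def by auto
qed

lemma vcmp_id2:
  assumes "\<alpha> \<in> cells C f g"
  shows vcmp_id2_right: "vcmp C \<alpha> (id2 C f) = \<alpha>"
    and vcmp_id2_left: "vcmp C (id2 C g) \<alpha> = \<alpha>"
  using assms two_cat unfolding two_cat_def cells_def by auto

lemma hcmp_in_cells:
  assumes "\<alpha> \<in> cells C f f'" "\<beta> \<in> cells C h h'" "tgt C f = src C h"
  shows "hcmp C \<beta> \<alpha> \<in> cells C (cmp C h f) (cmp C h' f')"
proof -
  have "\<forall>\<alpha>\<in>cell C. \<forall>\<beta>\<in>cell C. tgt C (dom2 C \<alpha>) = src C (dom2 C \<beta>) \<longrightarrow>
      hcmp C \<beta> \<alpha> \<in> cells C (cmp C (dom2 C \<beta>) (dom2 C \<alpha>)) (cmp C (cod2 C \<beta>) (cod2 C \<alpha>))"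
    using two_cat unfolding two_cat_def by blast
  then show ?thesis using assms unfolding cells_def by auto
qed

lemma hcmp_assoc:
  assumes "\<alpha> \<in> cells C f f'" "\<beta> \<in> cells C g g'" "\<gamma> \<in> cells C h h'"
    and "tgt C f = src C g" "tgt C g = src C h"
  shows "hcmp C \<gamma> (hcmp C \<beta> \<alpha>) = hcmp C (hcmp C \<gamma> \<beta>) \<alpha>"
proof -
  have "\<forall>\<alpha>\<in>cell C. \<forall>\<beta>\<in>cell C. \<forall>\<gamma>\<in>cell C.
      tgt C (dom2 C \<alpha>) = src C (dom2 C \<beta>) \<longrightarrow> tgt C (dom2 C \<beta>) = src C (dom2 C \<gamma>) \<longrightarrow>
      hcmp C \<gamma> (hcmp C \<beta> \<alpha>) = hcmp C (hcmp C \<gamma> \<beta>) \<alpha>"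
    using two_cat unfolding two_cat_def by blast
  then show ?thesis using assms unfolding cells_def by auto
qed

lemma hcmp_id2_id2:
  "f \<in> arr C \<Longrightarrow> g \<in> arr C \<Longrightarrow> tgt C f = src C g \<Longrightarrow>
    hcmp C (id2 C g) (id2 C f) = id2 C (cmp C g f)"
  using two_cat unfolding two_cat_def by blast

lemma interchange:
  assumes "\<alpha> \<in> cells C f f'" "\<alpha>' \<in> cells C f' f''" "\<beta> \<in> cells C h h'" "\<beta>' \<in> cells C h' h''"
    and "tgt C f = src C h"
  shows "vcmp C (hcmp C \<beta>' \<alpha>') (hcmp C \<beta> \<alpha>) = hcmp C (vcmp C \<beta>' \<beta>) (vcmp C \<alpha>' \<alpha>)"
proof -
  have "\<forall>\<alpha>\<in>cell C. \<forall>\<alpha>'\<in>cell C. \<forall>\<beta>\<in>cell C. \<forall>\<beta>'\<in>cell C.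
      cod2 C \<alpha> = dom2 C \<alpha>' \<longrightarrow> cod2 C \<beta> = dom2 C \<beta>' \<longrightarrow> tgt C (dom2 C \<alpha>) = src C (dom2 C \<beta>) \<longrightarrow>
      vcmp C (hcmp C \<beta>' \<alpha>') (hcmp C \<beta> \<alpha>) = hcmp C (vcmp C \<beta>' \<beta>) (vcmp C \<alpha>' \<alpha>)"
    using two_cat unfolding two_cat_def by blast
  then show ?thesis using assms unfolding cells_def by auto
qed

lemma wr_in_cells:
  "\<alpha> \<in> cells C h k \<Longrightarrow> j \<in> arr C \<Longrightarrow> tgt C j = src C h \<Longrightarrow>
    wr C \<alpha> j \<in> cells C (cmp C h j) (cmp C k j)"
  unfolding wr_def by (rule hcmp_in_cells[OF id2_in_cells])

lemma wl_in_cells: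
  "\<alpha> \<in> cells C g k \<Longrightarrow> h \<in> arr C \<Longrightarrow> tgt C g = src C h \<Longrightarrow>
    wl C h \<alpha> \<in> cells C (cmp C h g) (cmp C h k)"
  unfolding wl_def by (rule hcmp_in_cells[OF _ id2_in_cells])

lemma wr_vcmp:
  assumes "\<alpha> \<in> cells C f g" "\<beta> \<in> cells C g h" "j \<in> arr C" "tgt C j = src C f"
  shows "wr C (vcmp C \<beta> \<alpha>) j = vcmp C (wr C \<beta> j) (wr C \<alpha> j)"
  unfolding wr_def
  using interchange[OF id2_in_cells id2_in_cells assms(1,2)] vcmp_id2[OF id2_in_cells] assms(3,4)
  by simp

lemma wr_id2:
  "h \<in> arr C \<Longrightarrow> j \<in> arr C \<Longrightarrow> tgt C j = src C h \<Longrightarrow> wr C (id2 C h) j = id2 C (cmp C h j)"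
  unfolding wr_def by (rule hcmp_id2_id2)

lemma wr_wr:
  assumes "\<alpha> \<in> cells C h k" "f \<in> arr C" "j \<in> arr C" "tgt C f = src C h" "tgt C j = src C f"
  shows "wr C (wr C \<alpha> f) j = wr C \<alpha> (cmp C f j)"
  unfolding wr_def
  using hcmp_assoc[OF id2_in_cells id2_in_cells assms(1)] hcmp_id2_id2 assms(2-5) by simp

lemma wl_wr_interchange:
  assumes \<theta>: "\<theta> \<in> cells C H H'" and \<kappa>: "\<kappa> \<in> cells C G K" and "tgt C G = src C H"
  shows "vcmp C (wl C H' \<kappa>) (wr C \<theta> G) = vcmp C (wr C \<theta> K) (wl C H \<kappa>)"
proof -
  have arrs: "H \<in> arr C" "H' \<in> arr C" "G \<in> arr C" "K \<in> arr C"
    using cells_arrD[OF \<theta>] cells_arrD[OF \<kappa>] by auto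
  have "vcmp C (wl C H' \<kappa>) (wr C \<theta> G) = hcmp C (vcmp C (id2 C H') \<theta>) (vcmp C \<kappa> (id2 C G))"
    unfolding wl_def wr_def by (rule interchange[OF id2_in_cells \<kappa> \<theta> id2_in_cells]) (use arrs assms in auto)
  also have "\<dots> = hcmp C (vcmp C \<theta> (id2 C H)) (vcmp C (id2 C K) \<kappa>)"
    using vcmp_id2[OF \<theta>] vcmp_id2[OF \<kappa>] by simp
  also have "\<dots> = vcmp C (wr C \<theta> K) (wl C H \<kappa>)"
    unfolding wl_def wr_def
    by (rule interchange[OF \<kappa> id2_in_cells id2_in_cells \<theta>, symmetric]) (use arrs assms in auto)
  finally show ?thesis .
qed

lemma inverse_cells_wr:
  assumes inv: "inverse_cells C H H' \<theta> \<theta>'" and "k \<in> arr C" "tgt C k = src C H"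
  shows "inverse_cells C (cmp C H k) (cmp C H' k) (wr C \<theta> k) (wr C \<theta>' k)"
proof -
  have \<theta>: "\<theta> \<in> cells C H H'" and \<theta>': "\<theta>' \<in> cells C H' H"
    using inv unfolding inverse_cells_def by auto
  have "tgt C k = src C H'" using cells_arrD(4)[OF \<theta>] assms(3) by simp
  then show ?thesis
    using inv assms(2,3) cells_arrD[OF \<theta>] wr_in_cells[OF \<theta>] wr_in_cells[OF \<theta>']
      wr_vcmp[OF \<theta> \<theta>'] wr_vcmp[OF \<theta>' \<theta>] wr_id2
    unfolding inverse_cells_def by simp
qed

lemma bij_betw_vcmp_inverse:
  assumes "inverse_cells C H H' \<theta> \<theta>'"
  shows "bij_betw (vcmp C \<theta>) (cells C F H) (cells C F H')"
proof (rule bij_betw_byWitness[where f' = "vcmp C \<theta>'"])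
  have \<theta>: "\<theta> \<in> cells C H H'" and \<theta>': "\<theta>' \<in> cells C H' H"
    and inv: "vcmp C \<theta>' \<theta> = id2 C H" "vcmp C \<theta> \<theta>' = id2 C H'"
    using assms unfolding inverse_cells_def by auto
  show "\<forall>\<beta>\<in>cells C F H. vcmp C \<theta>' (vcmp C \<theta> \<beta>) = \<beta>"
    using vcmp_assoc[OF _ \<theta> \<theta>'] inv vcmp_id2_left by simp
  show "\<forall>\<beta>\<in>cells C F H'. vcmp C \<theta> (vcmp C \<theta>' \<beta>) = \<beta>"
    using vcmp_assoc[OF _ \<theta>' \<theta>] inv vcmp_id2_left by simp
  show "vcmp C \<theta> ` cells C F H \<subseteq> cells C F H'" "vcmp C \<theta>' ` cells C F H' \<subseteq> cells C F H"
    using vcmp_in_cells \<theta> \<theta>' by blast+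
qed

lemma left_ext_factor:
  assumes "left_ext C F G H \<phi>" "k \<in> hom C (src C H) (tgt C H)" "\<alpha> \<in> cells C F (cmp C k G)"
  obtains \<kappa> where "\<kappa> \<in> cells C H k" "vcmp C (wr C \<kappa> G) \<phi> = \<alpha>"
proof -
  have "\<alpha> \<in> (\<lambda>\<kappa>. vcmp C (wr C \<kappa> G) \<phi>) ` cells C H k"
    using assms unfolding left_ext_def bij_betw_def by blast
  then show ?thesis using that by blast
qed

lemma left_ext_cancel:
  assumes "left_ext C F G H \<phi>" "k \<in> hom C (src C H) (tgt C H)"
    and "\<kappa> \<in> cells C H k" "\<kappa>' \<in> cells C H k" "vcmp C (wr C \<kappa> G) \<phi> = vcmp C (wr C \<kappa>' G) \<phi>"
  shows "\<kappa> = \<kappa>'"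
  using assms unfolding left_ext_def bij_betw_def inj_on_def by blast

lemma left_ext_id2:
  assumes "left_ext C F G H \<phi>"
  shows "vcmp C (wr C (id2 C H) G) \<phi> = \<phi>"
proof -
  have "H \<in> arr C" "G \<in> arr C" "tgt C G = src C H" "\<phi> \<in> cells C F (cmp C H G)"
    using assms unfolding left_ext_def by auto
  then show ?thesis by (simp add: wr_id2 vcmp_id2_left)
qed

lemma left_ext_cancel_endo:
  assumes ext: "left_ext C F G H \<phi>"
    and \<kappa>: "\<kappa> \<in> cells C H H" and \<kappa>\<phi>: "vcmp C (wr C \<kappa> G) \<phi> = \<phi>"
  shows "\<kappa> = id2 C H"
proof (rule left_ext_cancel[OF ext _ \<kappa>])
  show "H \<in> hom C (src C H) (tgt C H)" "id2 C H \<in> cells C H H"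
    using cells_arrD(2)[OF \<kappa>] id2_in_cells by (auto simp: hom_def)
  show "vcmp C (wr C \<kappa> G) \<phi> = vcmp C (wr C (id2 C H) G) \<phi>"
    using \<kappa>\<phi> left_ext_id2[OF ext] by simp
qed

text \<open>The comparison 2-cells between two left extensions of the same 1-cell compose to
  2-cells fixing the universal 2-cells, which by uniqueness are identities.\<close>

lemma left_ext_unique:
  assumes ext: "left_ext C F G H \<phi>" and ext': "left_ext C F G H' \<phi>'"
  obtains \<theta> \<theta>' where "inverse_cells C H H' \<theta> \<theta>'" "vcmp C (wr C \<theta> G) \<phi> = \<phi>'"
proof -
  have G: "G \<in> arr C" "tgt C G = src C H" "tgt C G = src C H'"
    and \<phi>: "\<phi> \<in> cells C F (cmp C H G)" and \<phi>': "\<phi>' \<in> cells C F (cmp C H' G)"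
    and homs: "H' \<in> hom C (src C H) (tgt C H)" "H \<in> hom C (src C H') (tgt C H')"
    using ext ext' unfolding left_ext_def hom_def by auto
  obtain \<theta> where \<theta>: "\<theta> \<in> cells C H H'" and \<theta>\<phi>: "vcmp C (wr C \<theta> G) \<phi> = \<phi>'"
    using left_ext_factor[OF ext homs(1) \<phi>'] .
  obtain \<theta>' where \<theta>': "\<theta>' \<in> cells C H' H" and \<theta>'\<phi>': "vcmp C (wr C \<theta>' G) \<phi>' = \<phi>"
    using left_ext_factor[OF ext' homs(2) \<phi>] .
  have "vcmp C (wr C (vcmp C \<theta>' \<theta>) G) \<phi> = \<phi>"
    using wr_vcmp[OF \<theta> \<theta>' G(1,2)] vcmp_assoc[OF \<phi> wr_in_cells[OF \<theta> G(1,2)] wr_in_cells[OF \<theta>' G(1,3)]]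
      \<theta>\<phi> \<theta>'\<phi>' by simp
  then have "vcmp C \<theta>' \<theta> = id2 C H"
    using left_ext_cancel_endo[OF ext vcmp_in_cells[OF \<theta> \<theta>']] by blast
  moreover have "vcmp C (wr C (vcmp C \<theta> \<theta>') G) \<phi>' = \<phi>'"
    using wr_vcmp[OF \<theta>' \<theta> G(1,3)] vcmp_assoc[OF \<phi>' wr_in_cells[OF \<theta>' G(1,3)] wr_in_cells[OF \<theta> G(1,2)]]
      \<theta>\<phi> \<theta>'\<phi>' by simp
  then have "vcmp C \<theta> \<theta>' = id2 C H'"
    using left_ext_cancel_endo[OF ext' vcmp_in_cells[OF \<theta>' \<theta>]] by blast
  ultimately show ?thesis
    using that \<theta> \<theta>' \<theta>\<phi> unfolding inverse_cells_def by blast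
qed

text \<open>By naturality of whiskering, the bijection for the transported 2-cell is the old
  bijection followed by postcomposition with the invertible 2-cell \<open>\<theta> k\<close>.\<close>

lemma left_lift_transport:
  assumes lift: "left_lift C F G H \<psi>" and inv: "inverse_cells C H H' \<theta> \<theta>'"
  shows "left_lift C F G H' (vcmp C (wr C \<theta> G) \<psi>)"
proof -
  have \<theta>: "\<theta> \<in> cells C H H'" using inv unfolding inverse_cells_def by blast
  have G: "G \<in> arr C" "tgt C G = src C H" "tgt C G = src C H'"
    and \<psi>: "\<psi> \<in> cells C F (cmp C H G)"
    and bij: "\<And>k. k \<in> hom C (src C G) (tgt C G) \<Longrightarrow>
       bij_betw (\<lambda>\<kappa>. vcmp C (wl C H \<kappa>) \<psi>) (cells C G k) (cells C F (cmp C H k))"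
    using lift cells_arrD[OF \<theta>] unfolding left_lift_def by auto
  have \<theta>G: "wr C \<theta> G \<in> cells C (cmp C H G) (cmp C H' G)"
    using wr_in_cells[OF \<theta> G(1,2)] .
  have "bij_betw (\<lambda>\<kappa>. vcmp C (wl C H' \<kappa>) (vcmp C (wr C \<theta> G) \<psi>)) (cells C G k) (cells C F (cmp C H' k))"
    if k: "k \<in> hom C (src C G) (tgt C G)" for k
  proof -
    have k_arr: "k \<in> arr C" "tgt C k = src C H" using k G unfolding hom_def by auto
    have "vcmp C (wl C H' \<kappa>) (vcmp C (wr C \<theta> G) \<psi>) =
        (vcmp C (wr C \<theta> k) \<circ> (\<lambda>\<kappa>. vcmp C (wl C H \<kappa>) \<psi>)) \<kappa>"
      if \<kappa>: "\<kappa> \<in> cells C G k" for \<kappa>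
    proof -
      have "vcmp C (wl C H' \<kappa>) (vcmp C (wr C \<theta> G) \<psi>) = vcmp C (vcmp C (wl C H' \<kappa>) (wr C \<theta> G)) \<psi>"
        using vcmp_assoc[OF \<psi> \<theta>G wl_in_cells[OF \<kappa>]] cells_arrD[OF \<theta>] G by simp
      also have "\<dots> = vcmp C (vcmp C (wr C \<theta> k) (wl C H \<kappa>)) \<psi>"
        using wl_wr_interchange[OF \<theta> \<kappa> G(2)] by simp
      also have "\<dots> = vcmp C (wr C \<theta> k) (vcmp C (wl C H \<kappa>) \<psi>)"
        using vcmp_assoc[OF \<psi> wl_in_cells[OF \<kappa>] wr_in_cells[OF \<theta> k_arr]] cells_arrD[OF \<theta>] G
        by simp
      finally show ?thesis by simp
    qed
    moreover have "bij_betw (vcmp C (wr C \<theta> k) \<circ> (\<lambda>\<kappa>. vcmp C (wl C H \<kappa>) \<psi>))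
        (cells C G k) (cells C F (cmp C H' k))"
      using bij_betw_trans[OF bij[OF k] bij_betw_vcmp_inverse[OF inverse_cells_wr[OF inv k_arr]]] .
    ultimately show ?thesis
      using bij_betw_cong[of "cells C G k" "\<lambda>\<kappa>. vcmp C (wl C H' \<kappa>) (vcmp C (wr C \<theta> G) \<psi>)"]
      by blast
  qed
  then show ?thesis
    using lift vcmp_in_cells[OF \<psi> \<theta>G] cells_arrD[OF \<theta>] unfolding left_lift_def by auto
qed

lemma abs_left_lift_transport:
  assumes lift: "abs_left_lift C F G H \<psi>" and inv: "inverse_cells C H H' \<theta> \<theta>'"
  shows "abs_left_lift C F G H' (vcmp C (wr C \<theta> G) \<psi>)"
proof -
  have \<theta>: "\<theta> \<in> cells C H H'" using inv unfolding inverse_cells_def by blast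
  have lift0: "left_lift C F G H \<psi>" using lift unfolding abs_left_lift_def by blast
  have G: "G \<in> arr C" "src C G = src C F" "tgt C G = src C H" and \<psi>: "\<psi> \<in> cells C F (cmp C H G)"
    using lift0 unfolding left_lift_def by auto
  have "left_lift C (cmp C F j) (cmp C G j) H' (wr C (vcmp C (wr C \<theta> G) \<psi>) j)"
    if "D \<in> obj C" and j: "j \<in> hom C D (src C F)" for D j
  proof -
    have j_arr: "j \<in> arr C" "tgt C j = src C G" using j G unfolding hom_def by auto
    have "wr C (vcmp C (wr C \<theta> G) \<psi>) j = vcmp C (wr C \<theta> (cmp C G j)) (wr C \<psi> j)"
      using wr_vcmp[OF \<psi> wr_in_cells[OF \<theta> G(1,3)] j_arr(1)] wr_wr[OF \<theta> G(1) j_arr(1) G(3)] j_arr(2) G(2)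
      by simp
    moreover have "left_lift C (cmp C F j) (cmp C G j) H (wr C \<psi> j)"
      using lift that unfolding abs_left_lift_def by blast
    ultimately show ?thesis using left_lift_transport inv by simp
  qed
  then show ?thesis
    using left_lift_transport[OF lift0 inv] unfolding abs_left_lift_def by blast
qed

end

lemma good_yoneda_two_category:
  "good_yoneda C adm PP y R chi \<Longrightarrow> two_category C"
  unfolding good_yoneda_def finitely_complete_def two_category_def by blast

lemma good_yoneda_abs_left_lift_chi:
  assumes "good_yoneda C adm PP y R chi" "f \<in> adm" "adm_obj C adm (src C f)"
  shows "abs_left_lift C (y (src C f)) f (R f) (chi f)"
  using assms unfolding good_yoneda_def by blast

lemma good_yoneda_pointwise_left_ext:
  assumes "good_yoneda C adm PP y R chi" "f \<in> adm" "adm_obj C adm (src C f)"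
    and "abs_left_lift C (y (src C f)) f g \<phi>"
  shows "pointwise_left_ext C (y (src C f)) f g \<phi>"
  using assms unfolding good_yoneda_def by blast

theorem lemma3p2:
  fixes C :: "('o, 'a, 'c) twocat"
  assumes "finitely_complete C"
    and "good_yoneda C adm PP y R chi"
    and "adm_obj C adm A"
    and "f \<in> hom C A B" and "f \<in> adm"
    and "g \<in> hom C B (PP A)"
    and "\<phi> \<in> cells C (y A) (cmp C g f)"
    and "left_ext C (y A) f g \<phi>"
  shows "pointwise_left_ext C (y A) f g \<phi> \<and> abs_left_lift C (y A) f g \<phi>"
proof -
  interpret two_category C using good_yoneda_two_category[OF assms(2)] .
  have src_f: "src C f = A" using assms(4) unfolding hom_def by simp
  note yoneda = assms(2,5) assms(3)[folded src_f]
  have chi_lift: "abs_left_lift C (y A) f (R f) (chi f)"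
    using good_yoneda_abs_left_lift_chi[OF yoneda] src_f by simp
  then have "left_ext C (y A) f (R f) (chi f)"
    using good_yoneda_pointwise_left_ext[OF yoneda] src_f unfolding pointwise_left_ext_def by simp
  then obtain \<theta> \<theta>' where "inverse_cells C (R f) g \<theta> \<theta>'" "vcmp C (wr C \<theta> f) (chi f) = \<phi>"
    using left_ext_unique assms(8) by blast
  then have "abs_left_lift C (y A) f g \<phi>"
    using abs_left_lift_transport[OF chi_lift] by blast
  with good_yoneda_pointwise_left_ext[OF yoneda] src_f show ?thesis by simp
qed

end
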